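(* Let $G=(V,E)$ be a hypergraph and let $k$ and $m$ be integers such that the vertices of $G$ can be $k$-colored so that every hyperedge containing at least $m$ vertices contains a vertex of each of the $k$ colors. Then for every integer $t'>1$, with $k'=\binom{k}{t'}+\sum_{i=0}^{t'-2}\binom{k-1}{i}$ and $m'=\max\{m,k(t'-1)+1\}$, there exists a $k'$-coloring of the $t'$-tuples of vertices of $G$ such that every hyperedge containing at least $m'$ vertices contains a $t'$-tuple of each of the $k'$ colors.
   Context: A $t'$-tuple of vertices is a $t'$-element subset of $V$; a hyperedge contains it if it is a subset of the hyperedge. Binomial coefficients $\binom{a}{b}$ with $b>a$ are $0$. *)

theory Defs
  imports Main
begin

definition hypergraph :: "'a set \<Rightarrow> 'a set set \<Rightarrow> bool" where
  "hypergraph V E \<longleftrightarrow> finite V \<and> (\<forall>e\<in>E. e \<subseteq> V)"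

definition tuples :: "nat \<Rightarrow> 'a set \<Rightarrow> 'a set set" where
  "tuples t V = {T. T \<subseteq> V \<and> card T = t}"

definition good_vertex_colouring :: "'a set \<Rightarrow> 'a set set \<Rightarrow> nat \<Rightarrow> nat \<Rightarrow> ('a \<Rightarrow> nat) \<Rightarrow> bool" where
  "good_vertex_colouring V E k m c \<longleftrightarrow>
     (\<forall>v\<in>V. c v < k) \<and>
     (\<forall>e\<in>E. card e \<ge> m \<longrightarrow> (\<forall>j<k. \<exists>v\<in>e. c v = j))"

definition good_tuple_colouring :: "nat \<Rightarrow> 'a set \<Rightarrow> 'a set set \<Rightarrow> nat \<Rightarrow> nat \<Rightarrow> ('a set \<Rightarrow> nat) \<Rightarrow> bool" where
  "good_tuple_colouring t V E k m c \<longleftrightarrow>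
     (\<forall>T\<in>tuples t V. c T < k) \<and>
     (\<forall>e\<in>E. card e \<ge> m \<longrightarrow> (\<forall>j<k. \<exists>T\<in>tuples t V. T \<subseteq> e \<and> c T = j))"

end

theory Submission
  imports Defs
begin

text \<open>A t-tuple whose vertex colours are pairwise distinct is coloured by its set of colours,
  a t-subset of the k colours. Any other t-tuple has a least repeated colour r; it is coloured
  by its remaining colours, at most t-2 of them, renumbered into the k-1 colours other than r. In a hyperedge with all k colours every
  t-subset of colours is realised by picking one vertex per colour. If moreover the hyperedge
  has more than k(t-1) vertices, some colour r occurs at least t times, and a set A of at
  most t-2 renumbered colours is realised by one vertex for each colour of A together with
  t - |A| \<ge> 2 vertices of colour r, so that r is the only repeated colour.\<close>

definition gap_remove :: "nat \<Rightarrow> nat \<Rightarrow> nat" where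
  "gap_remove r b = (if b < r then b else b - 1)"

definition repeated_colour :: "('a \<Rightarrow> nat) \<Rightarrow> 'a set \<Rightarrow> nat" where
  "repeated_colour c T = (LEAST x. 2 \<le> card {v\<in>T. c v = x})"

definition tuple_colour :: "('a \<Rightarrow> nat) \<Rightarrow> 'a set \<Rightarrow> nat set + nat set" where
  "tuple_colour c T =
     (if inj_on c T then Inl (c ` T)
      else let r = repeated_colour c T in Inr (gap_remove r ` (c ` T - {r})))"

definition tuple_palette :: "nat \<Rightarrow> nat \<Rightarrow> (nat set + nat set) set" where
  "tuple_palette k t =
     Inl ` {S. S \<subseteq> {..<k} \<and> card S = t} \<union> Inr ` {A. A \<subseteq> {..<k-1} \<and> card A \<le> t - 2}"

lemma gap_remove_image:
  assumes "r < k"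
  shows "gap_remove r ` ({..<k} - {r}) = {..<k-1}"
proof (intro equalityI subsetI)
  fix b assume "b \<in> {..<k-1}"
  then have "b = gap_remove r (if b < r then b else Suc b)"
    and "(if b < r then b else Suc b) \<in> {..<k} - {r}"
    using assms by (auto simp: gap_remove_def)
  then show "b \<in> gap_remove r ` ({..<k} - {r})" by blast
qed (use assms in \<open>auto simp: gap_remove_def\<close>)

lemma card_subsets_card_le:
  assumes "finite N"
  shows "card {A. A \<subseteq> N \<and> card A \<le> s} = (\<Sum>i\<le>s. card N choose i)"
proof -
  have "{A. A \<subseteq> N \<and> card A \<le> s} = (\<Union>i\<le>s. {A. A \<subseteq> N \<and> card A = i})"
    by auto
  also have "card \<dots> = (\<Sum>i\<le>s. card {A. A \<subseteq> N \<and> card A = i})"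
    using assms by (intro card_UN_disjoint) (auto intro: finite_subset[of _ "Pow N"])
  finally show ?thesis
    using assms by (simp add: n_subsets)
qed

lemma finite_tuple_palette: "finite (tuple_palette k t)"
  unfolding tuple_palette_def
  by (auto intro: finite_subset[of _ "Pow {..<k}"] finite_subset[of _ "Pow {..<k-1}"])

lemma card_tuple_palette:
  "card (tuple_palette k t) = (k choose t) + (\<Sum>i\<le>t-2. (k-1) choose i)"
proof -
  have "card (tuple_palette k t) =
      card {S. S \<subseteq> {..<k} \<and> card S = t} + card {A. A \<subseteq> {..<k-1} \<and> card A \<le> t - 2}"
    unfolding tuple_palette_def
    by (subst card_Un_disjoint)
       (auto intro: finite_subset[of _ "Pow {..<k}"] finite_subset[of _ "Pow {..<k-1}"]
             simp: card_image)
  then show ?thesis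
    by (simp add: n_subsets card_subsets_card_le)
qed

lemma card_colour_class_le_1:
  assumes "inj_on c S"
  shows "card {v\<in>S. c v = x} \<le> 1"
proof -
  have "card {v\<in>S. c v = x} = card (c ` {v\<in>S. c v = x})"
    using assms by (intro card_image[symmetric]) (auto intro: inj_on_subset)
  also have "\<dots> \<le> card {x}"
    by (intro card_mono) auto
  finally show ?thesis by simp
qed

lemma repeated_colour_repeated:
  assumes "finite T" "\<not> inj_on c T"
  shows "2 \<le> card {v\<in>T. c v = repeated_colour c T}"
proof -
  obtain u w where uw: "u \<in> T" "w \<in> T" "u \<noteq> w" "c u = c w"
    using assms(2) by (auto simp: inj_on_def)
  have "card {u, w} \<le> card {v\<in>T. c v = c u}"
    using assms(1) uw by (intro card_mono) auto
  then have "2 \<le> card {v\<in>T. c v = c u}"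
    using uw(3) by simp
  then show ?thesis
    unfolding repeated_colour_def by (rule LeastI)
qed

lemma repeated_colour_eqI:
  assumes "2 \<le> card {v\<in>T. c v = r}" "inj_on c {v\<in>T. c v \<noteq> r}"
  shows "repeated_colour c T = r"
  unfolding repeated_colour_def
proof (rule Least_equality)
  fix y assume y: "2 \<le> card {v\<in>T. c v = y}"
  have "y = r"
  proof (rule ccontr)
    assume "y \<noteq> r"
    then have "{v\<in>T. c v = y} = {v\<in>{v\<in>T. c v \<noteq> r}. c v = y}" by auto
    then show False
      using y card_colour_class_le_1[OF assms(2), of y] by simp
  qed
  then show "r \<le> y" by simp
qed (rule assms(1))

lemma tuple_colour_in_palette:
  assumes "finite T" "c ` T \<subseteq> {..<k}" "card T = t"
  shows "tuple_colour c T \<in> tuple_palette k t"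
proof (cases "inj_on c T")
  case True
  then show ?thesis
    using assms by (simp add: tuple_colour_def tuple_palette_def card_image)
next
  case False
  define r where "r = repeated_colour c T"
  have "2 \<le> card {v\<in>T. c v = r}"
    using repeated_colour_repeated[OF assms(1) False] by (simp add: r_def)
  then have r: "r \<in> c ` T"
    by (metis (mono_tags, lifting) card.empty empty_Collect_eq image_eqI not_numeral_le_zero)
  have "card (c ` T) \<noteq> card T"
    using False eq_card_imp_inj_on[OF assms(1)] by blast
  then have "card (c ` T) < t"
    using card_image_le[OF assms(1), of c] assms(3) by linarith
  then have "card (gap_remove r ` (c ` T - {r})) \<le> t - 2"
    using r assms(1) card_image_le[of "c ` T - {r}" "gap_remove r"] by simp
  moreover have "gap_remove r ` (c ` T - {r}) \<subseteq> {..<k-1}"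
    using r assms(2) gap_remove_image[of r k] by blast
  ultimately show ?thesis
    using False by (simp add: tuple_colour_def tuple_palette_def flip: r_def)
qed

lemma tuple_colour_Inl_realised:
  assumes "finite e" "S \<subseteq> c ` e"
  shows "\<exists>T\<subseteq>e. card T = card S \<and> tuple_colour c T = Inl S"
proof -
  obtain T where "T \<subseteq> e" "inj_on c T" "S = c ` T"
    using subset_image_inj[THEN iffD1, OF assms(2)] by blast
  then show ?thesis
    by (intro exI[of _ T]) (simp add: tuple_colour_def card_image)
qed

lemma tuple_colour_single_repeat:
  assumes "inj_on c W" "r \<notin> c ` W" "\<forall>v\<in>R. c v = r" "2 \<le> card R"
  shows "tuple_colour c (R \<union> W) = Inr (gap_remove r ` c ` W)"
proof -
  have colour_r: "{v \<in> R \<union> W. c v = r} = R"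
    and other_colours: "{v \<in> R \<union> W. c v \<noteq> r} = W"
    using assms(2,3) by auto
  have repeated: "2 \<le> card {v \<in> R \<union> W. c v = r}"
    using colour_r assms(4) by simp
  then have "\<not> inj_on c (R \<union> W)"
    using card_colour_class_le_1[of c "R \<union> W" r] by linarith
  moreover have "repeated_colour c (R \<union> W) = r"
    using repeated_colour_eqI[OF repeated] other_colours assms(1) by simp
  moreover have "c ` (R \<union> W) - {r} = c ` W"
    using assms(2,3) by auto
  ultimately show ?thesis
    by (simp add: tuple_colour_def)
qed

lemma tuple_colour_Inr_realised:
  assumes "finite e" "{..<k} \<subseteq> c ` e" "r < k" "t \<le> card {v\<in>e. c v = r}"
    and "A \<subseteq> {..<k-1}" "card A \<le> t - 2" "2 \<le> t"
  shows "\<exists>T\<subseteq>e. card T = t \<and> tuple_colour c T = Inr A"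
proof -
  have "A \<subseteq> gap_remove r ` ({..<k} - {r})"
    using assms(3,5) gap_remove_image by simp
  then obtain B where B: "B \<subseteq> {..<k} - {r}" "inj_on (gap_remove r) B" "A = gap_remove r ` B"
    unfolding subset_image_inj by blast
  have "B \<subseteq> c ` e"
    using B(1) assms(2) by blast
  then obtain W where W: "W \<subseteq> e" "inj_on c W" "B = c ` W"
    unfolding subset_image_inj by blast
  have "t - card A \<le> card {v\<in>e. c v = r}"
    using assms(4) by simp
  then obtain R where R: "R \<subseteq> {v\<in>e. c v = r}" "card R = t - card A"
    by (meson obtain_subset_with_card_n)
  have "finite R" "finite W"
    using R(1) W(1) assms(1) finite_subset[of _ e] by auto
  moreover have "R \<inter> W = {}" "card W = card A"
    using R(1) W B by (auto simp: card_image)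
  ultimately have card_T: "card (R \<union> W) = t"
    using R(2) assms(6,7) card_Un_disjoint[of R W] by simp
  have "r \<notin> c ` W" "\<forall>v\<in>R. c v = r" "2 \<le> card R"
    using R W(3) B(1) assms(6,7) by auto
  then have "tuple_colour c (R \<union> W) = Inr A"
    using tuple_colour_single_repeat[OF W(2)] W(3) B(3) by simp
  then show ?thesis
    using card_T R(1) W(1) by (intro exI[of _ "R \<union> W"]) auto
qed

lemma pigeonhole_colour_class:
  assumes "finite e" "c ` e \<subseteq> {..<k}" "k * n < card e"
  shows "\<exists>r<k. n < card {v\<in>e. c v = r}"
proof (rule ccontr)
  assume "\<not> ?thesis"
  then have small: "\<And>r. r \<in> {..<k} \<Longrightarrow> card {v\<in>e. c v = r} \<le> n"
    by auto
  have "card e = card (\<Union>r<k. {v\<in>e. c v = r})"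
    using assms(2) by (intro arg_cong[where f = card]) auto
  also have "\<dots> \<le> (\<Sum>r<k. card {v\<in>e. c v = r})"
    by (rule card_UN_le) simp
  also have "\<dots> \<le> k * n"
    using sum_bounded_above[of "{..<k}", OF small] by simp
  finally show False
    using assms(3) by simp
qed

lemma tuple_colour_realises_palette:
  assumes "finite e" "c ` e = {..<k}" "k * (t - 1) < card e" "2 \<le> t"
    and "x \<in> tuple_palette k t"
  shows "\<exists>T\<subseteq>e. card T = t \<and> tuple_colour c T = x"
proof -
  obtain r where "r < k" "t - 1 < card {v\<in>e. c v = r}"
    using pigeonhole_colour_class[OF assms(1)] assms(2,3) by blast
  then have r: "r < k" "t \<le> card {v\<in>e. c v = r}"
    by linarith+
  consider S where "S \<subseteq> {..<k}" "card S = t" "x = Inl S"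
    | A where "A \<subseteq> {..<k-1}" "card A \<le> t - 2" "x = Inr A"
    using assms(5) unfolding tuple_palette_def by blast
  then show ?thesis
  proof cases
    case 1
    then show ?thesis
      using tuple_colour_Inl_realised[OF assms(1), of S c] assms(2) by auto
  next
    case 2
    then show ?thesis
      using tuple_colour_Inr_realised[OF assms(1) _ r _ _ assms(4)] assms(2) by blast
  qed
qed

lemma good_tuple_colouring_from_palette:
  assumes "finite C" "\<And>T. T \<in> tuples t V \<Longrightarrow> f T \<in> C"
    and "\<And>e x. e \<in> E \<Longrightarrow> m \<le> card e \<Longrightarrow> x \<in> C \<Longrightarrow> \<exists>T\<in>tuples t V. T \<subseteq> e \<and> f T = x"
  shows "\<exists>c'. good_tuple_colouring t V E (card C) m c'"
proof -
  obtain g where g: "bij_betw g C {0..<card C}"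
    using ex_bij_betw_finite_nat[OF assms(1)] by blast
  have "good_tuple_colouring t V E (card C) m (g \<circ> f)"
    unfolding good_tuple_colouring_def
  proof (intro conjI ballI allI impI)
    fix T assume "T \<in> tuples t V"
    then show "(g \<circ> f) T < card C"
      using assms(2) g by (auto dest: bij_betwE)
  next
    fix e j assume "e \<in> E" "m \<le> card e" "j < card C"
    moreover obtain x where "x \<in> C" "g x = j"
      using g \<open>j < card C\<close> unfolding bij_betw_def
      by (metis atLeast0LessThan imageE lessThan_iff)
    ultimately show "\<exists>T\<in>tuples t V. T \<subseteq> e \<and> (g \<circ> f) T = j"
      using assms(3) by auto
  qed
  then show ?thesis by blast
qed

theorem proposition4:
  fixes V :: "'a set" and E :: "'a set set" and k m t :: nat and c :: "'a \<Rightarrow> nat"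
  assumes "hypergraph V E"
    and "good_vertex_colouring V E k m c"
    and "t > 1"
  shows "\<exists>c'. good_tuple_colouring t V E
                 ((k choose t) + (\<Sum>i=0..t-2. (k-1) choose i))
                 (max m (k*(t-1)+1)) c'"
proof -
  have fin: "finite V" and edges: "\<And>e. e \<in> E \<Longrightarrow> e \<subseteq> V" and colours: "c ` V \<subseteq> {..<k}"
    using assms(1,2) by (auto simp: hypergraph_def good_vertex_colouring_def)
  have "tuple_colour c T \<in> tuple_palette k t" if "T \<in> tuples t V" for T
    using that colours
    by (intro tuple_colour_in_palette[OF finite_subset[OF _ fin]]) (auto simp: tuples_def)
  moreover have "\<exists>T\<in>tuples t V. T \<subseteq> e \<and> tuple_colour c T = x"
    if e: "e \<in> E" "max m (k*(t-1)+1) \<le> card e" and x: "x \<in> tuple_palette k t" for e x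
  proof -
    have "e \<subseteq> V" "c ` e = {..<k}"
      using e edges colours assms(2) by (fastforce simp: good_vertex_colouring_def)+
    moreover have "k * (t - 1) < card e" "2 \<le> t"
      using e(2) assms(3) by auto
    ultimately obtain T where "T \<subseteq> e" "card T = t" "tuple_colour c T = x"
      using tuple_colour_realises_palette[OF finite_subset[OF _ fin], of e c k t x] x by auto
    then show ?thesis
      using \<open>e \<subseteq> V\<close> by (auto simp: tuples_def)
  qed
  ultimately obtain c' where
    "good_tuple_colouring t V E (card (tuple_palette k t)) (max m (k*(t-1)+1)) c'"
    using good_tuple_colouring_from_palette[OF finite_tuple_palette] by blast
  then show ?thesis
    unfolding card_tuple_palette atLeast0AtMost by blast
qed

end
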